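(* Let $\mathbb{K}$ be an $\aleph_0$-complete field and $x=(x_1,\ldots,x_n)$. Let $F$ be a finite system of polynomial equations, with coefficients in $\mathbb{K}[\![x]\!]$, in unknowns $z_1,\ldots,z_q$ and some of their partial derivatives $\partial^{|j_1|}z_{i_1}/\partial x^{j_1},\ldots,\partial^{|j_s|}z_{i_s}/\partial x^{j_s}$, where $i_1,\ldots,i_s\in\{1,\ldots,q\}$ and $j_1,\ldots,j_s\in\mathbb{N}^n$. Then there exists a map $\tau:\mathbb{N}^{q+s}\to\mathbb{N}$ such that: if $c=(c_1,\ldots,c_q,c_{i_1,j_1},\ldots,c_{i_s,j_s})\in\mathbb{N}^{q+s}$ and $z'=(z'_1,\ldots,z'_q)\in\mathbb{K}[\![x]\!]^q$ satisfies $$F\left(z',\frac{\partial^{|j_1|}z'_{i_1}}{\partial x^{j_1}},\ldots,\frac{\partial^{|j_s|}z'_{i_s}}{\partial x^{j_s}}\right)\equiv 0 \text{ modulo } (x)^{\tau(c)},$$ $\mathrm{ord}(z'_i)=c_i$ for $i=1,\ldots,q$ and $\mathrm{ord}\left(\partial^{|j_k|}z'_{i_k}/\partial x^{j_k}\right)=c_{i_k,j_k}$ for $k=1,\ldots,s$, then there exists $z=(z_1,\ldots,z_q)\in\mathbb{K}[\![x]\!]^q$ which, together with its corresponding partial derivatives, is a solution of $F=0$ and satisfies $\mathrm{ord}(z_i)=c_i$ for all $i=1,\ldots,q$ and $\mathrm{ord}\left(\partial^{|j_k|}z_{i_k}/\partial x^{j_k}\right)=c_{i_k,j_k}$ for 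$k=1,\ldots,s$.
   Context: A field $\mathbb{K}$ is called $\aleph_0$-complete if every countable system $\mathcal S$ of polynomial equations with coefficients in $\mathbb{K}$ (in a countable number of indeterminates) has a solution in $\mathbb{K}$ if and only if every finite sub-system of $\mathcal S$ has a solution in $\mathbb{K}$. $(x)$ is the maximal ideal of $\mathbb{K}[\![x]\!]$; for $j=(j^1,\ldots,j^n)\in\mathbb{N}^n$, $|j|=j^1+\cdots+j^n$ and $\partial^{|j|}/\partial x^j$ denotes the formal partial derivative $\partial^{|j|}/\partial x_1^{j^1}\cdots\partial x_n^{j^n}$. For a power series $g$, $\mathrm{ord}(g)$ is the smallest total degree of a monomial appearing in $g$ with nonzero coefficient. *)

theory Defs
  imports Main "HOL-Library.Extended_Nat"
begin

text \<open>A polynomial in the indeterminates X_0, X_1, ... with coefficients in 'a is a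
finitely supported map from monomials (exponent functions nat => nat with finite
support) to coefficients.\<close>

definition is_cpoly :: "((nat \<Rightarrow> nat) \<Rightarrow> 'a::zero) \<Rightarrow> bool" where
  "is_cpoly p \<longleftrightarrow> finite {m. p m \<noteq> 0} \<and> (\<forall>m. p m \<noteq> 0 \<longrightarrow> finite {v. m v \<noteq> 0})"

definition cpoly_eval :: "((nat \<Rightarrow> nat) \<Rightarrow> 'a::comm_ring_1) \<Rightarrow> (nat \<Rightarrow> 'a) \<Rightarrow> 'a" where
  "cpoly_eval p u = (\<Sum>m\<in>{m. p m \<noteq> 0}. p m * (\<Prod>v\<in>{v. m v \<noteq> 0}. u v ^ m v))"

definition aleph0_complete :: "'a::field itself \<Rightarrow> bool" where
  "aleph0_complete _ \<longleftrightarrow>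
     (\<forall>S :: ((nat \<Rightarrow> nat) \<Rightarrow> 'a) set. countable S \<and> (\<forall>p\<in>S. is_cpoly p) \<longrightarrow>
        ((\<exists>u. \<forall>p\<in>S. cpoly_eval p u = 0) \<longleftrightarrow>
         (\<forall>T\<subseteq>S. finite T \<longrightarrow> (\<exists>u. \<forall>p\<in>T. cpoly_eval p u = 0))))"

text \<open>The variables x_1..x_n are indexed by a finite type 'n; a power series in
K[[x]] is a map from exponent vectors 'n => nat to coefficients.\<close>

type_synonym ('n, 'a) mps = "('n \<Rightarrow> nat) \<Rightarrow> 'a"

definition mps_zero :: "('n, 'a::zero) mps" where
  "mps_zero = (\<lambda>a. 0)"

definition mps_one :: "('n, 'a::{zero,one}) mps" where
  "mps_one = (\<lambda>a. if a = (\<lambda>_. 0) then 1 else 0)"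

definition mps_mult :: "('n::finite, 'a::comm_ring_1) mps \<Rightarrow> ('n, 'a) mps \<Rightarrow> ('n, 'a) mps" where
  "mps_mult f g = (\<lambda>a. \<Sum>b\<in>{b. \<forall>i. b i \<le> a i}. f b * g (\<lambda>i. a i - b i))"

fun mps_pow :: "('n::finite, 'a::comm_ring_1) mps \<Rightarrow> nat \<Rightarrow> ('n, 'a) mps" where
  "mps_pow f 0 = mps_one"
| "mps_pow f (Suc k) = mps_mult f (mps_pow f k)"

definition deg :: "('n::finite \<Rightarrow> nat) \<Rightarrow> nat" where
  "deg a = (\<Sum>i\<in>UNIV. a i)"

definition mps_deriv :: "('n::finite \<Rightarrow> nat) \<Rightarrow> ('n, 'a::comm_ring_1) mps \<Rightarrow> ('n, 'a) mps" where
  "mps_deriv j f = (\<lambda>a. of_nat (\<Prod>i\<in>UNIV. fact (a i + j i) div fact (a i)) * f (\<lambda>i. a i + j i))"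

definition mps_ord :: "('n::finite, 'a::zero) mps \<Rightarrow> enat" where
  "mps_ord f = (if f = mps_zero then \<infinity> else enat (LEAST d. \<exists>a. f a \<noteq> 0 \<and> deg a = d))"

text \<open>f is congruent to 0 modulo (x)^t, the t-th power of the maximal ideal.\<close>
definition mps_in_max_pow :: "('n::finite, 'a::zero) mps \<Rightarrow> nat \<Rightarrow> bool" where
  "mps_in_max_pow f t \<longleftrightarrow> (\<forall>a. deg a < t \<longrightarrow> f a = 0)"

text \<open>A polynomial in unknowns Y_0..Y_{m-1} with coefficients in K[[x]]:
finitely supported map from monomials e (exponents, zero at indices >= m) to series.\<close>

definition is_mps_poly :: "nat \<Rightarrow> ((nat \<Rightarrow> nat) \<Rightarrow> ('n, 'a::zero) mps) \<Rightarrow> bool" where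
  "is_mps_poly m P \<longleftrightarrow> finite {e. P e \<noteq> mps_zero} \<and>
     (\<forall>e. P e \<noteq> mps_zero \<longrightarrow> (\<forall>v\<ge>m. e v = 0))"

definition mps_monomial :: "nat \<Rightarrow> (nat \<Rightarrow> ('n::finite, 'a::comm_ring_1) mps) \<Rightarrow> (nat \<Rightarrow> nat) \<Rightarrow> ('n, 'a) mps" where
  "mps_monomial m y e = foldr (\<lambda>v acc. mps_mult (mps_pow (y v) (e v)) acc) [0..<m] mps_one"

definition mps_poly_eval :: "nat \<Rightarrow> ((nat \<Rightarrow> nat) \<Rightarrow> ('n::finite, 'a::comm_ring_1) mps)
    \<Rightarrow> (nat \<Rightarrow> ('n, 'a) mps) \<Rightarrow> ('n, 'a) mps" where
  "mps_poly_eval m P y = (\<lambda>a. \<Sum>e\<in>{e. P e \<noteq> mps_zero}. mps_mult (P e) (mps_monomial m y e) a)"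

text \<open>The substitution vector (z_1..z_q, d^{j_1} z_{i_1}, ..., d^{j_s} z_{i_s}), indexed from 0:
entry i < q is z i, entry q+k is mps_deriv (jj k) (z (ii k)).\<close>
definition sys_args :: "nat \<Rightarrow> (nat \<Rightarrow> nat) \<Rightarrow> (nat \<Rightarrow> 'n \<Rightarrow> nat)
    \<Rightarrow> (nat \<Rightarrow> ('n::finite, 'a::comm_ring_1) mps) \<Rightarrow> nat \<Rightarrow> ('n, 'a) mps" where
  "sys_args q ii jj z = (\<lambda>v. if v < q then z v else mps_deriv (jj (v - q)) (z (ii (v - q))))"

end

theory Submission
  imports Defs "HOL-Library.Countable"
begin

text \<open>Fix the prescribed orders c. Every coefficient of z, of its derivatives and of
  F(z, derivatives) is a polynomial in the coefficients of z, so the conditions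
  ``F = 0 modulo (x)^N and ord = c'' form, for each N, a countable polynomial system in
  countably many unknowns; the condition that some coefficient of degree c_k is nonzero
  becomes polynomial by asking that a linear combination of these coefficients with
  unknown weights equals 1. The systems increase with N. If all of them are solvable,
  aleph_0-completeness yields a common solution, which is an exact solution of order c.
  Otherwise let \<tau>(c) be the first N for which the system is unsolvable; then there is no
  approximate solution modulo (x)^\<tau>(c) of order c, and the claim holds vacuously.\<close>

definition monom_eval :: "(nat \<Rightarrow> nat) \<Rightarrow> (nat \<Rightarrow> 'a::comm_ring_1) \<Rightarrow> 'a" where
  "monom_eval m u = (\<Prod>v | m v \<noteq> 0. u v ^ m v)"

definition poly_fun :: "((nat \<Rightarrow> 'a::comm_ring_1) \<Rightarrow> 'a) \<Rightarrow> bool" where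
  "poly_fun f \<longleftrightarrow> (\<exists>p. is_cpoly p \<and> f = cpoly_eval p)"

lemma cpoly_eval_eq_sum_monom_eval:
  "cpoly_eval p = (\<lambda>u. \<Sum>m | p m \<noteq> 0. p m * monom_eval m u)"
  unfolding cpoly_eval_def monom_eval_def by simp

lemma monom_eval_eq_prod:
  assumes "finite S" "{v. m v \<noteq> 0} \<subseteq> S"
  shows "monom_eval m u = (\<Prod>v\<in>S. u v ^ m v)"
  unfolding monom_eval_def using assms by (intro prod.mono_neutral_left) auto

lemma monom_eval_add:
  assumes "finite {v. m1 v \<noteq> 0}" "finite {v. m2 v \<noteq> 0}"
  shows "monom_eval (\<lambda>v. m1 v + m2 v) u = monom_eval m1 u * monom_eval m2 u"
proof -
  let ?S = "{v. m1 v \<noteq> 0} \<union> {v. m2 v \<noteq> 0}"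
  have S: "finite ?S" using assms by blast
  have "monom_eval (\<lambda>v. m1 v + m2 v) u = (\<Prod>v\<in>?S. u v ^ (m1 v + m2 v))"
    by (rule monom_eval_eq_prod[OF S]) auto
  also have "\<dots> = (\<Prod>v\<in>?S. u v ^ m1 v) * (\<Prod>v\<in>?S. u v ^ m2 v)"
    by (simp add: power_add prod.distrib)
  also have "\<dots> = monom_eval m1 u * monom_eval m2 u"
    by (simp add: monom_eval_eq_prod[OF S])
  finally show ?thesis .
qed

lemma poly_fun_sum_monom_eval:
  assumes "finite I" "\<forall>i\<in>I. finite {v. g i v \<noteq> 0}"
  shows "poly_fun (\<lambda>u. \<Sum>i\<in>I. c i * monom_eval (g i) u)"
proof -
  define p where "p m = (\<Sum>i | i \<in> I \<and> g i = m. c i)" for m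
  have supp: "{m. p m \<noteq> 0} \<subseteq> g ` I"
    unfolding p_def by (auto elim: sum.not_neutral_contains_not_neutral)
  then have "is_cpoly p"
    unfolding is_cpoly_def using assms finite_subset by blast
  moreover have "cpoly_eval p u = (\<Sum>i\<in>I. c i * monom_eval (g i) u)" for u
  proof -
    have "cpoly_eval p u = (\<Sum>m\<in>g ` I. p m * monom_eval m u)"
      unfolding cpoly_eval_eq_sum_monom_eval
      by (rule sum.mono_neutral_left) (use supp assms in auto)
    also have "\<dots> = (\<Sum>m\<in>g ` I. \<Sum>i | i \<in> I \<and> g i = m. c i * monom_eval (g i) u)"
      unfolding p_def sum_distrib_right by (intro sum.cong refl) auto
    also have "\<dots> = (\<Sum>i\<in>I. c i * monom_eval (g i) u)"
      by (rule sum.group) (use assms in auto)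
    finally show ?thesis .
  qed
  ultimately show ?thesis
    unfolding poly_fun_def by (intro exI[of _ p]) auto
qed

lemma poly_fun_const: "poly_fun (\<lambda>u. k)"
  using poly_fun_sum_monom_eval[of "{()}" "\<lambda>_ _. 0" "\<lambda>_. k"]
  by (simp add: monom_eval_def)

lemma poly_fun_var: "poly_fun (\<lambda>u. u v)"
proof -
  have "{w. (if w = v then 1 else 0::nat) \<noteq> 0} = {v}" by auto
  then show ?thesis
    using poly_fun_sum_monom_eval[of "{()}" "\<lambda>_ w. if w = v then 1 else 0" "\<lambda>_. 1"]
    by (simp add: monom_eval_def)
qed

lemma poly_fun_add:
  assumes "poly_fun f" "poly_fun g"
  shows "poly_fun (\<lambda>u. f u + g u)"
proof -
  obtain p1 p2 where p: "is_cpoly p1" "f = cpoly_eval p1" "is_cpoly p2" "g = cpoly_eval p2"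
    using assms unfolding poly_fun_def by blast
  let ?I = "{m. p1 m \<noteq> 0} <+> {m. p2 m \<noteq> 0}"
  have "poly_fun (\<lambda>u. \<Sum>i\<in>?I. case_sum p1 p2 i * monom_eval (case_sum id id i) u)"
    by (rule poly_fun_sum_monom_eval) (use p in \<open>auto simp: is_cpoly_def\<close>)
  then show ?thesis
    using p by (simp add: sum.Plus is_cpoly_def cpoly_eval_eq_sum_monom_eval)
qed

lemma poly_fun_mult:
  assumes "poly_fun f" "poly_fun g"
  shows "poly_fun (\<lambda>u. f u * g u)"
proof -
  obtain p1 p2 where p: "is_cpoly p1" "f = cpoly_eval p1" "is_cpoly p2" "g = cpoly_eval p2"
    using assms unfolding poly_fun_def by blast
  let ?I = "{m. p1 m \<noteq> 0} \<times> {m. p2 m \<noteq> 0}"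
  have "poly_fun (\<lambda>u. \<Sum>i\<in>?I. (p1 (fst i) * p2 (snd i)) * monom_eval (\<lambda>v. fst i v + snd i v) u)"
    by (rule poly_fun_sum_monom_eval) (use p in \<open>auto simp: is_cpoly_def\<close>)
  moreover have "(\<Sum>i\<in>?I. (p1 (fst i) * p2 (snd i)) * monom_eval (\<lambda>v. fst i v + snd i v) u)
      = (\<Sum>i\<in>?I. (p1 (fst i) * monom_eval (fst i) u) * (p2 (snd i) * monom_eval (snd i) u))" for u
    by (intro sum.cong refl) (use p in \<open>auto simp: is_cpoly_def monom_eval_add\<close>)
  ultimately show ?thesis
    using p by (simp add: sum_product sum.cartesian_product cpoly_eval_eq_sum_monom_eval case_prod_beta)
qed

lemma poly_fun_diff:
  assumes "poly_fun f" "poly_fun g"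
  shows "poly_fun (\<lambda>u. f u - g u)"
  using poly_fun_add[OF assms(1) poly_fun_mult[OF poly_fun_const assms(2)], of "-1"] by simp

lemma poly_fun_sum:
  assumes "\<And>i. i \<in> I \<Longrightarrow> poly_fun (f i)"
  shows "poly_fun (\<lambda>u. \<Sum>i\<in>I. f i u)"
proof (cases "finite I")
  case True
  then show ?thesis
    using assms by (induction I rule: finite_induct) (auto intro: poly_fun_add poly_fun_const)
qed (simp add: poly_fun_const)

subsection \<open>Compactness of aleph_0-complete fields\<close>

lemma aleph0_complete_common_zero:
  assumes "aleph0_complete TYPE('a::field)" "countable E" "\<forall>f\<in>E. poly_fun f"
    and "\<forall>T\<subseteq>E. finite T \<longrightarrow> (\<exists>u. \<forall>f\<in>T. f u = 0)"
  shows "\<exists>u. \<forall>f\<in>E. f u = (0::'a)"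
proof -
  have "\<forall>f\<in>E. \<exists>p. is_cpoly p \<and> cpoly_eval p = f"
    using assms(3) unfolding poly_fun_def by auto
  then obtain rep where rep: "\<And>f. f \<in> E \<Longrightarrow> is_cpoly (rep f) \<and> cpoly_eval (rep f) = f"
    by (auto dest!: bchoice)
  have "countable (rep ` E)" "\<forall>p\<in>rep ` E. is_cpoly p"
    using assms(2) rep by auto
  then have solvable_iff: "(\<exists>u. \<forall>p\<in>rep ` E. cpoly_eval p u = 0) \<longleftrightarrow>
      (\<forall>T\<subseteq>rep ` E. finite T \<longrightarrow> (\<exists>u. \<forall>p\<in>T. cpoly_eval p u = 0))"
    using assms(1) unfolding aleph0_complete_def by (elim allE[of _ "rep ` E"]) simp
  have "\<exists>u. \<forall>p\<in>T. cpoly_eval p u = 0" if T: "T \<subseteq> rep ` E" "finite T" for T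
  proof -
    obtain E' where E': "E' \<subseteq> E" "finite E'" "T = rep ` E'"
      using T by (meson finite_subset_image)
    then obtain u where "\<forall>f\<in>E'. f u = 0" using assms(4) by blast
    then have "\<forall>p\<in>T. cpoly_eval p u = 0" using E' rep by auto
    then show ?thesis by blast
  qed
  then obtain u where "\<forall>p\<in>rep ` E. cpoly_eval p u = 0"
    using solvable_iff by blast
  then have "\<forall>f\<in>E. f u = 0" using rep by auto
  then show ?thesis by blast
qed

lemma aleph0_complete_common_zero_mono:
  fixes E :: "nat \<Rightarrow> ((nat \<Rightarrow> 'a::field) \<Rightarrow> 'a) set"
  assumes "aleph0_complete TYPE('a)" "mono E"
    and "\<And>N. countable (E N)" "\<And>N. \<forall>f\<in>E N. poly_fun f"
    and "\<And>N. \<exists>u. \<forall>f\<in>E N. f u = 0"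
  shows "\<exists>u. \<forall>N. \<forall>f\<in>E N. f u = 0"
proof -
  have "E N \<subseteq> E M \<or> E M \<subseteq> E N" for N M
    using nat_le_linear[of N M] monoD[OF assms(2)] by blast
  then have chain: "subset.chain UNIV (range E)"
    unfolding subset.chain_def by blast
  have finitely_solvable: "\<forall>T\<subseteq>(\<Union>N. E N). finite T \<longrightarrow> (\<exists>u. \<forall>f\<in>T. f u = 0)"
  proof (intro allI impI)
    fix T assume "T \<subseteq> (\<Union>N. E N)" "finite T"
    then obtain N where "T \<subseteq> E N"
      using finite_subset_Union_chain[OF _ _ _ chain] by blast
    then show "\<exists>u. \<forall>f\<in>T. f u = 0" using assms(5)[of N] by blast
  qed
  have "countable (\<Union>N. E N)"
    by (intro countable_UN) (simp_all add: assms(3))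
  moreover have "\<forall>f\<in>(\<Union>N. E N). poly_fun f"
    using assms(4) by blast
  ultimately show ?thesis
    using aleph0_complete_common_zero[OF assms(1) _ _ finitely_solvable] by auto
qed

definition poly_coeffs :: "((nat \<Rightarrow> 'a) \<Rightarrow> ('n::finite, 'a::comm_ring_1) mps) \<Rightarrow> bool" where
  "poly_coeffs Y \<longleftrightarrow> (\<forall>a. poly_fun (\<lambda>u. Y u a))"

lemma poly_coeffs_const: "poly_coeffs (\<lambda>u. f)"
  by (simp add: poly_coeffs_def poly_fun_const)

lemma poly_coeffs_mult:
  assumes "poly_coeffs Y1" "poly_coeffs Y2"
  shows "poly_coeffs (\<lambda>u. mps_mult (Y1 u) (Y2 u))"
  using assms unfolding poly_coeffs_def mps_mult_def by (auto intro!: poly_fun_sum poly_fun_mult)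

lemma poly_coeffs_pow:
  assumes "poly_coeffs Y"
  shows "poly_coeffs (\<lambda>u. mps_pow (Y u) k)"
  by (induction k) (simp_all add: poly_coeffs_const poly_coeffs_mult assms)

lemma poly_coeffs_monomial:
  assumes "\<And>v. poly_coeffs (\<lambda>u. y u v)"
  shows "poly_coeffs (\<lambda>u. mps_monomial m (y u) e)"
proof -
  have "poly_coeffs (\<lambda>u. foldr (\<lambda>v acc. mps_mult (mps_pow (y u v) (e v)) acc) vs mps_one)" for vs
    by (induction vs) (simp_all add: poly_coeffs_const poly_coeffs_mult poly_coeffs_pow assms)
  then show ?thesis unfolding mps_monomial_def .
qed

lemma poly_coeffs_poly_eval:
  assumes "\<And>v. poly_coeffs (\<lambda>u. y u v)"
  shows "poly_coeffs (\<lambda>u. mps_poly_eval m P (y u))"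
  using poly_coeffs_mult[OF poly_coeffs_const poly_coeffs_monomial[OF assms]]
  unfolding poly_coeffs_def mps_poly_eval_def by (auto intro!: poly_fun_sum)

lemma poly_coeffs_deriv:
  assumes "poly_coeffs Y"
  shows "poly_coeffs (\<lambda>u. mps_deriv j (Y u))"
  using assms unfolding poly_coeffs_def mps_deriv_def by (auto intro: poly_fun_mult poly_fun_const)

lemma poly_coeffs_sys_args:
  assumes "\<And>i. poly_coeffs (\<lambda>u. z u i)"
  shows "poly_coeffs (\<lambda>u. sys_args q ii jj (z u) v)"
  unfolding sys_args_def by (cases "v < q") (simp_all add: assms poly_coeffs_deriv)

lemma mps_ord_eq_enat_iff:
  "mps_ord (w :: ('n::finite, 'a::zero) mps) = enat c \<longleftrightarrow>
     (\<forall>a. deg a < c \<longrightarrow> w a = 0) \<and> (\<exists>a. deg a = c \<and> w a \<noteq> 0)"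
proof
  assume ord: "mps_ord w = enat c"
  then have "w \<noteq> mps_zero" by (auto simp: mps_ord_def)
  then have ex: "\<exists>d a. w a \<noteq> 0 \<and> deg a = d" by (auto simp: mps_zero_def)
  have c: "c = (LEAST d. \<exists>a. w a \<noteq> 0 \<and> deg a = d)"
    using ord \<open>w \<noteq> mps_zero\<close> by (simp add: mps_ord_def)
  show "(\<forall>a. deg a < c \<longrightarrow> w a = 0) \<and> (\<exists>a. deg a = c \<and> w a \<noteq> 0)"
    using LeastI_ex[OF ex] not_less_Least[of _ "\<lambda>d. \<exists>a. w a \<noteq> 0 \<and> deg a = d"]
    unfolding c by blast
next
  assume h: "(\<forall>a. deg a < c \<longrightarrow> w a = 0) \<and> (\<exists>a. deg a = c \<and> w a \<noteq> 0)"
  then have "w \<noteq> mps_zero" by (auto simp: mps_zero_def)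
  moreover have "(LEAST d. \<exists>a. w a \<noteq> 0 \<and> deg a = d) = c"
    by (rule Least_equality) (use h not_le in blast)+
  ultimately show "mps_ord w = enat c" by (simp add: mps_ord_def)
qed

lemma mps_in_max_pow_all_imp_zero:
  assumes "\<forall>N. mps_in_max_pow f N"
  shows "f = mps_zero"
proof
  fix a
  show "f a = mps_zero a"
    using assms[rule_format, of "Suc (deg a)"] by (simp add: mps_in_max_pow_def mps_zero_def)
qed

lemma finite_deg_eq: "finite {a :: 'n::finite \<Rightarrow> nat. deg a = c}"
proof (rule finite_subset)
  show "{a :: 'n \<Rightarrow> nat. deg a = c} \<subseteq> {a. \<forall>i. (i \<in> UNIV \<longrightarrow> a i \<in> {..c}) \<and> (i \<notin> UNIV \<longrightarrow> a i = 0)}"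
    unfolding deg_def by (auto intro: member_le_sum)
qed (rule finite_set_of_finite_funs; simp)

lemma ex_nonzero_iff_lincomb_eq_1:
  assumes "finite D"
  shows "(\<exists>a\<in>D. w a \<noteq> 0) \<longleftrightarrow> (\<exists>l. (\<Sum>a\<in>D. l a * w a) = (1::'a::field))"
proof
  assume "\<exists>a\<in>D. w a \<noteq> 0"
  then obtain a where a: "a \<in> D" "w a \<noteq> 0" by blast
  have "(\<Sum>b\<in>D. (if b = a then inverse (w a) else 0) * w b) = (\<Sum>b\<in>D. if b = a then 1 else 0)"
    by (intro sum.cong) (use a in auto)
  also have "\<dots> = 1"
    using a assms by simp
  finally show "\<exists>l. (\<Sum>a\<in>D. l a * w a) = 1"
    by (rule exI[of _ "\<lambda>b. if b = a then inverse (w a) else 0"])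
qed (use sum.neutral in force)

lemma all_less_add_iff:
  fixes q s :: nat
  shows "(\<forall>k<q + s. R k) \<longleftrightarrow> (\<forall>k<q. R k) \<and> (\<forall>k<s. R (q + k))"
proof -
  have "R k" if "\<forall>k<q. R k" "\<forall>k<s. R (q + k)" "k < q + s" for k
    using that by (cases "k < q") (auto dest: spec[of _ "k - q"])
  then show ?thesis by auto
qed

lemma all_sys_args_iff:
  "(\<forall>k<q + s. PP (sys_args q ii jj z k) k) \<longleftrightarrow>
     (\<forall>i<q. PP (z i) i) \<and> (\<forall>k<s. PP (mps_deriv (jj k) (z (ii k))) (q + k))"
  by (simp add: all_less_add_iff sys_args_def)

subsection \<open>The truncated systems\<close>

definition series_of :: "(nat \<Rightarrow> 'a) \<Rightarrow> nat \<Rightarrow> ('n::finite, 'a) mps" where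
  "series_of u i a = u (to_nat (Inl (i, a) :: (nat \<times> ('n \<Rightarrow> nat)) + (nat \<times> ('n \<Rightarrow> nat))))"

definition weights_of :: "(nat \<Rightarrow> 'a) \<Rightarrow> nat \<Rightarrow> ('n::finite \<Rightarrow> nat) \<Rightarrow> 'a" where
  "weights_of u k a = u (to_nat (Inr (k, a) :: (nat \<times> ('n \<Rightarrow> nat)) + (nat \<times> ('n \<Rightarrow> nat))))"

lemma ex_series_weights_of:
  fixes z :: "nat \<Rightarrow> ('n::finite, 'a) mps" and wt :: "nat \<Rightarrow> ('n \<Rightarrow> nat) \<Rightarrow> 'a"
  shows "\<exists>u. series_of u = z \<and> weights_of u = wt"
proof -
  define u where "u n = (case from_nat n :: (nat \<times> ('n \<Rightarrow> nat)) + (nat \<times> ('n \<Rightarrow> nat)) of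
      Inl (i, a) \<Rightarrow> z i a | Inr (k, a) \<Rightarrow> wt k a)" for n
  have "series_of u = z" "weights_of u = wt"
    unfolding series_of_def weights_of_def u_def by (simp_all add: fun_eq_iff)
  then show ?thesis by blast
qed

lemma poly_coeffs_series_of: "poly_coeffs (\<lambda>u. series_of u i)"
  unfolding poly_coeffs_def series_of_def by (simp add: poly_fun_var)

text \<open>One enumeration of a countable sum type interleaves the coefficients of the unknown
  series (series_of) with the auxiliary weights (weights_of) as the unknowns of a single
  polynomial system; A z is the vector of series whose orders are prescribed.\<close>

definition truncated_system ::
  "((nat \<Rightarrow> nat) \<Rightarrow> ('n::finite, 'a::comm_ring_1) mps) set \<Rightarrow> nat
    \<Rightarrow> ((nat \<Rightarrow> ('n, 'a) mps) \<Rightarrow> nat \<Rightarrow> ('n, 'a) mps) \<Rightarrow> (nat \<Rightarrow> nat) \<Rightarrow> nat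
    \<Rightarrow> ((nat \<Rightarrow> 'a) \<Rightarrow> 'a) set" where
  "truncated_system F m A c N =
     {\<lambda>u. mps_poly_eval m P (A (series_of u)) a | P a. P \<in> F \<and> deg a < N}
   \<union> {\<lambda>u. A (series_of u) k a | k a. k < m \<and> deg a < c k}
   \<union> {\<lambda>u. (\<Sum>a | deg a = c k. weights_of u k a * A (series_of u) k a) - 1 | k. k < m}"

lemma truncated_system_mono: "mono (truncated_system F m A c)"
  by (rule monoI) (fastforce simp: truncated_system_def)

lemma countable_truncated_system:
  fixes F :: "((nat \<Rightarrow> nat) \<Rightarrow> ('n::finite, 'a::comm_ring_1) mps) set"
  assumes "finite F"
  shows "countable (truncated_system F m A c N)"
proof -
  let ?S = "truncated_system F m A c N"
  have "?S \<subseteq> (\<lambda>(P, a) u. mps_poly_eval m P (A (series_of u)) a) ` (F \<times> UNIV)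
      \<union> (\<lambda>(k, a) u. A (series_of u) k a) ` UNIV
      \<union> range (\<lambda>k u. (\<Sum>a | deg a = c k. weights_of u k a * A (series_of u) k a) - 1)"
    unfolding truncated_system_def by fastforce
  moreover have "countable (F \<times> (UNIV :: ('n \<Rightarrow> nat) set))"
    by (rule countable_SIGMA) (simp_all add: countable_finite assms)
  ultimately show ?thesis
    by (elim countable_subset) (intro countable_Un countable_image; simp)
qed

lemma poly_fun_truncated_system:
  assumes "\<And>k. poly_coeffs (\<lambda>u. A (series_of u) k)"
  shows "\<forall>f\<in>truncated_system F m A c N. poly_fun f"
  using assms poly_coeffs_poly_eval[of "\<lambda>u. A (series_of u)"]
  unfolding truncated_system_def poly_coeffs_def
  by (auto intro!: poly_fun_diff poly_fun_sum poly_fun_mult poly_fun_const poly_fun_var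
      simp: weights_of_def)

lemma truncated_system_zero_iff:
  "(\<forall>f\<in>truncated_system F m A c N. f u = 0) \<longleftrightarrow>
     (\<forall>P\<in>F. mps_in_max_pow (mps_poly_eval m P (A (series_of u))) N) \<and>
     (\<forall>k<m. (\<forall>a. deg a < c k \<longrightarrow> A (series_of u) k a = 0) \<and>
            (\<Sum>a | deg a = c k. weights_of u k a * A (series_of u) k a) = 1)"
  (is "?zero \<longleftrightarrow> ?conds")
proof
  assume zero: ?zero
  have "mps_poly_eval m P (A (series_of u)) a = 0" if "P \<in> F" "deg a < N" for P a
    using bspec[OF zero, of "\<lambda>u. mps_poly_eval m P (A (series_of u)) a"] that
    unfolding truncated_system_def by blast
  moreover have "A (series_of u) k a = 0" if "k < m" "deg a < c k" for k a
    using bspec[OF zero, of "\<lambda>u. A (series_of u) k a"] that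
    unfolding truncated_system_def by blast
  moreover have "(\<Sum>a | deg a = c k. weights_of u k a * A (series_of u) k a) = 1" if "k < m" for k
    using bspec[OF zero, of "\<lambda>u. (\<Sum>a | deg a = c k. weights_of u k a * A (series_of u) k a) - 1"] that
    unfolding truncated_system_def by auto
  ultimately show ?conds
    unfolding mps_in_max_pow_def by blast
next
  assume ?conds
  then show ?zero
    unfolding truncated_system_def mps_in_max_pow_def by auto
qed

lemma truncated_system_zeroD:
  fixes A :: "(nat \<Rightarrow> ('n::finite, 'a::field) mps) \<Rightarrow> nat \<Rightarrow> ('n, 'a) mps"
  assumes "\<forall>f\<in>truncated_system F m A c N. f u = 0"
  shows "\<forall>P\<in>F. mps_in_max_pow (mps_poly_eval m P (A (series_of u))) N"
    and "\<forall>k<m. mps_ord (A (series_of u) k) = enat (c k)"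
  using assms ex_nonzero_iff_lincomb_eq_1[OF finite_deg_eq]
  unfolding truncated_system_zero_iff mps_ord_eq_enat_iff by (simp; blast)+

lemma truncated_system_solvable:
  fixes A :: "(nat \<Rightarrow> ('n::finite, 'a::field) mps) \<Rightarrow> nat \<Rightarrow> ('n, 'a) mps"
  assumes "\<forall>P\<in>F. mps_in_max_pow (mps_poly_eval m P (A z)) N"
    and "\<forall>k<m. mps_ord (A z k) = enat (c k)"
  shows "\<exists>u. \<forall>f\<in>truncated_system F m A c N. f u = 0"
proof -
  have "\<exists>l. (\<Sum>a | deg a = c k. l a * A z k a) = 1" if "k < m" for k
    using assms(2) that ex_nonzero_iff_lincomb_eq_1[OF finite_deg_eq]
    unfolding mps_ord_eq_enat_iff by blast
  then obtain wt where wt: "\<forall>k<m. (\<Sum>a | deg a = c k. wt k a * A z k a) = 1"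
    by metis
  obtain u where "series_of u = z" "weights_of u = wt"
    using ex_series_weights_of by blast
  then show ?thesis
    using assms wt unfolding truncated_system_zero_iff mps_ord_eq_enat_iff by auto
qed

theorem corollary4p3:
  fixes F :: "((nat \<Rightarrow> nat) \<Rightarrow> ('n::finite, 'a::field) mps) set"
    and q s :: nat
    and ii :: "nat \<Rightarrow> nat"
    and jj :: "nat \<Rightarrow> 'n \<Rightarrow> nat"
  assumes "aleph0_complete TYPE('a)"
    and "finite F"
    and "\<forall>P\<in>F. is_mps_poly (q + s) P"
    and "\<forall>k<s. ii k < q"
  shows "\<exists>\<tau> :: (nat \<Rightarrow> nat) \<Rightarrow> nat. \<forall>(c :: nat \<Rightarrow> nat) (z' :: nat \<Rightarrow> ('n, 'a) mps).
     (\<forall>P\<in>F. mps_in_max_pow (mps_poly_eval (q + s) P (sys_args q ii jj z')) (\<tau> c))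
     \<and> (\<forall>i<q. mps_ord (z' i) = enat (c i))
     \<and> (\<forall>k<s. mps_ord (mps_deriv (jj k) (z' (ii k))) = enat (c (q + k)))
     \<longrightarrow> (\<exists>z :: nat \<Rightarrow> ('n, 'a) mps.
           (\<forall>P\<in>F. mps_poly_eval (q + s) P (sys_args q ii jj z) = mps_zero)
           \<and> (\<forall>i<q. mps_ord (z i) = enat (c i))
           \<and> (\<forall>k<s. mps_ord (mps_deriv (jj k) (z (ii k))) = enat (c (q + k))))"
proof -
  let ?E = "truncated_system F (q + s) (sys_args q ii jj)"
  define \<tau> where "\<tau> c = (LEAST N. \<not> (\<exists>u. \<forall>f\<in>?E c N. f u = 0))" for c
  have poly: "\<forall>f\<in>?E c N. poly_fun f" for c N
    by (intro poly_fun_truncated_system poly_coeffs_sys_args poly_coeffs_series_of)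
  show ?thesis
  proof (intro exI[of _ \<tau>] allI impI; elim conjE)
    fix c z'
    assume approx: "\<forall>P\<in>F. mps_in_max_pow (mps_poly_eval (q + s) P (sys_args q ii jj z')) (\<tau> c)"
      and "\<forall>i<q. mps_ord (z' i) = enat (c i)"
      and "\<forall>k<s. mps_ord (mps_deriv (jj k) (z' (ii k))) = enat (c (q + k))"
    then have "\<forall>k<q + s. mps_ord (sys_args q ii jj z' k) = enat (c k)"
      using all_sys_args_iff[where PP = "\<lambda>w k. mps_ord w = enat (c k)"] by blast
    then have "\<exists>u. \<forall>f\<in>?E c (\<tau> c). f u = 0"
      using truncated_system_solvable[of F "q + s" "sys_args q ii jj" z'] approx by blast
    then have "\<exists>u. \<forall>f\<in>?E c N. f u = 0" for N
      using LeastI[of "\<lambda>N. \<not> (\<exists>u. \<forall>f\<in>?E c N. f u = 0)" N] unfolding \<tau>_def by blast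
    then obtain u where u: "\<forall>N. \<forall>f\<in>?E c N. f u = 0"
      using aleph0_complete_common_zero_mono[OF assms(1) truncated_system_mono]
        countable_truncated_system[OF assms(2)] poly by blast
    have "\<forall>P\<in>F. mps_poly_eval (q + s) P (sys_args q ii jj (series_of u)) = mps_zero"
      using truncated_system_zeroD(1)[OF spec[OF u]] mps_in_max_pow_all_imp_zero by blast
    moreover have "\<forall>k<q + s. mps_ord (sys_args q ii jj (series_of u) k) = enat (c k)"
      using truncated_system_zeroD(2)[OF spec[OF u, of 0]] .
    ultimately show "\<exists>z. (\<forall>P\<in>F. mps_poly_eval (q + s) P (sys_args q ii jj z) = mps_zero)
           \<and> (\<forall>i<q. mps_ord (z i) = enat (c i))
           \<and> (\<forall>k<s. mps_ord (mps_deriv (jj k) (z (ii k))) = enat (c (q + k)))"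
      using all_sys_args_iff[where PP = "\<lambda>w k. mps_ord w = enat (c k)"] by blast
  qed
qed

end
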